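(* Let $N=\{1,\dots,n\}$ be agents and $A$ a finite item set with additive valuations with externalities $V_i(j,a)\in\mathbb{R}$. Every complete allocation satisfying PROP-Ave satisfies GFS.
   Context: A complete allocation $\pi$ partitions $A$ into bundles $\pi_1,\dots,\pi_n$; $\pi(a)$ is the agent receiving $a$; $V_i(j,a)$ is agent $i$'s value when item $a$ goes to agent $j$; $V_i(\pi)=\sum_{a\in A}V_i(\pi(a),a)$. $\pi$ satisfies PROP-Ave if $V_i(\pi)\ge\frac1n\sum_{a\in A}\sum_{j\in N}V_i(j,a)$ for all $i$. Let $V_i^{max}(a)=\max_{j\in N}V_i(j,a)$, $V_i^{min}(a)=\min_{j\in N}V_i(j,a)$, $\mathrm{GFS}_i=\frac1n\sum_{a\in A}(V_i^{max}(a)-V_i^{min}(a))$; $\pi$ satisfies GFS if $V_i(\pi)\ge\mathrm{GFS}_i+\sum_{a\in A}V_i^{min}(a)$ for all $i\in N$. *)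

theory Defs
  imports Complex_Main
begin

text \<open>V i j a is agent i's value
when item a is given to agent j. A complete allocation is a map \<sigma> assigning each
item of A to an agent in N (bundles are the fibres of \<sigma>).\<close>

definition complete_allocation :: "nat \<Rightarrow> 'a set \<Rightarrow> ('a \<Rightarrow> nat) \<Rightarrow> bool" where
  "complete_allocation n A \<sigma> \<longleftrightarrow> (\<forall>a\<in>A. \<sigma> a \<in> {1..n})"

definition alloc_value :: "(nat \<Rightarrow> nat \<Rightarrow> 'a \<Rightarrow> real) \<Rightarrow> 'a set \<Rightarrow> nat \<Rightarrow> ('a \<Rightarrow> nat) \<Rightarrow> real" where
  "alloc_value V A i \<sigma> = (\<Sum>a\<in>A. V i (\<sigma> a) a)"

definition PROP_Ave :: "nat \<Rightarrow> 'a set \<Rightarrow> (nat \<Rightarrow> nat \<Rightarrow> 'a \<Rightarrow> real) \<Rightarrow> ('a \<Rightarrow> nat) \<Rightarrow> bool" where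
  "PROP_Ave n A V \<sigma> \<longleftrightarrow>
     (\<forall>i\<in>{1..n}. alloc_value V A i \<sigma> \<ge> (1 / real n) * (\<Sum>a\<in>A. \<Sum>j\<in>{1..n}. V i j a))"

definition Vmax :: "nat \<Rightarrow> (nat \<Rightarrow> nat \<Rightarrow> 'a \<Rightarrow> real) \<Rightarrow> nat \<Rightarrow> 'a \<Rightarrow> real" where
  "Vmax n V i a = Max ((\<lambda>j. V i j a) ` {1..n})"

definition Vmin :: "nat \<Rightarrow> (nat \<Rightarrow> nat \<Rightarrow> 'a \<Rightarrow> real) \<Rightarrow> nat \<Rightarrow> 'a \<Rightarrow> real" where
  "Vmin n V i a = Min ((\<lambda>j. V i j a) ` {1..n})"

definition GFS_share :: "nat \<Rightarrow> 'a set \<Rightarrow> (nat \<Rightarrow> nat \<Rightarrow> 'a \<Rightarrow> real) \<Rightarrow> nat \<Rightarrow> real" where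
  "GFS_share n A V i = (1 / real n) * (\<Sum>a\<in>A. Vmax n V i a - Vmin n V i a)"

definition GFS :: "nat \<Rightarrow> 'a set \<Rightarrow> (nat \<Rightarrow> nat \<Rightarrow> 'a \<Rightarrow> real) \<Rightarrow> ('a \<Rightarrow> nat) \<Rightarrow> bool" where
  "GFS n A V \<sigma> \<longleftrightarrow>
     (\<forall>i\<in>{1..n}. alloc_value V A i \<sigma> \<ge> GFS_share n A V i + (\<Sum>a\<in>A. Vmin n V i a))"

end

theory Submission
  imports Defs
begin

text \<open>For each item, the values of agent i summed over the n recipients are at least
  the maximum plus n - 1 times the minimum. Summing over the items and dividing by n,
  the proportional-average share of agent i dominates the GFS threshold, so any
  allocation meeting the former meets the latter.\<close>

lemma sum_ge_Max_plus_Min: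
  fixes f :: "'b \<Rightarrow> real"
  assumes "finite J" and "J \<noteq> {}"
  shows "Max (f ` J) + (real (card J) - 1) * Min (f ` J) \<le> (\<Sum>j\<in>J. f j)"
proof -
  have "Max (f ` J) \<in> f ` J"
    using assms by (intro Max_in) auto
  then obtain k where k: "k \<in> J" "f k = Max (f ` J)"
    by auto
  have "(\<Sum>j\<in>J - {k}. Min (f ` J)) \<le> (\<Sum>j\<in>J - {k}. f j)"
    using assms by (intro sum_mono) auto
  moreover have "card (J - {k}) = card J - 1"
    using k by simp
  moreover have "card J \<ge> 1"
    using assms by (simp add: Suc_le_eq card_gt_0_iff)
  ultimately show ?thesis
    using k assms by (simp add: sum.remove of_nat_diff)
qed

lemma GFS_threshold_le_average_value:
  assumes "n \<ge> 1"
  shows "GFS_share n A V i + (\<Sum>a\<in>A. Vmin n V i a)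
           \<le> (1 / real n) * (\<Sum>a\<in>A. \<Sum>j\<in>{1..n}. V i j a)"
proof -
  have n_pos: "real n > 0"
    using assms by simp
  have "GFS_share n A V i + (\<Sum>a\<in>A. Vmin n V i a)
      = (1 / real n) * (\<Sum>a\<in>A. Vmax n V i a + (real n - 1) * Vmin n V i a)"
    unfolding GFS_share_def using n_pos
    by (simp add: sum.distrib sum_subtractf sum_distrib_left field_simps)
  also have "\<dots> \<le> (1 / real n) * (\<Sum>a\<in>A. \<Sum>j\<in>{1..n}. V i j a)"
    using sum_ge_Max_plus_Min[of "{1..n}"] assms n_pos
    unfolding Vmax_def Vmin_def by (intro mult_left_mono sum_mono) auto
  finally show ?thesis .
qed

theorem proposition4:
  fixes n :: nat and A :: "'a set" and V :: "nat \<Rightarrow> nat \<Rightarrow> 'a \<Rightarrow> real"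
    and \<sigma> :: "'a \<Rightarrow> nat"
  assumes "n \<ge> 1" and "finite A"
    and "complete_allocation n A \<sigma>"
    and "PROP_Ave n A V \<sigma>"
  shows "GFS n A V \<sigma>"
  using assms(4) GFS_threshold_le_average_value[OF assms(1)]
  unfolding PROP_Ave_def GFS_def by (blast intro: order_trans)

end
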